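(* Let $M$ be an entrywise nonnegative $m\times n$ real matrix and $r$ a positive integer. Then $\mathrm{rank}^+(M)\le r$ if and only if there exist integers $0\le s,t\le r$, sets $U\subseteq[m]$ with $|U|=s$ and $V\subseteq[n]$ with $|V|=t$, positive integers $p\le\binom rs$ and $q\le\binom rt$, and real matrices $B_1,\dots,B_p$ (each $r\times s$) and $C_1,\dots,C_q$ (each $t\times r$) for which the test $\mathbb P$ outputs PASS.
   Context: $\mathrm{rank}^+(M)$ is the smallest $r$ with $M=AW$, $A\in\mathbb{R}_{\ge0}^{m\times r}$, $W\in\mathbb{R}_{\ge0}^{r\times n}$. Notation: $M_i$ is the $i$-th column, $M^j$ the $j$-th row, $M_i^U\in\mathbb{R}^s$ the entries of column $i$ in rows $U$, $M^j_V\in\mathbb{R}^{1\times t}$ the entries of row $j$ in columns $V$. Support of a vector = set of indices of nonzero entries. Lexicographic ordering on subsets of $[r]$: if $|S|<|T|$ then $S$ precedes $T$; equal-size subsets compared by standard lexicographic order. For a finite collection $\mathcal S$ of vectors, $\mathrm{first}(\mathcal S)$ is the vector with lexicographically minimal support among all entrywise nonnegative vectors in $\mathcal S$; it is FAIL if $\mathcal S$ contains no nonnegative vector or if two or more distinct nonnegative vectors tie for the lexicographically earliest support. The test $\mathbb P$: for each $i\in[n]$ set $W_i=\mathrm{first}(\{B_1M_i^U,\dots,B_pM_i^U\})$ and for each $j\in[m]$ set $A^j=\mathrm{first}(\{M^j_VC_1,\dots,M^j_VC_q\})$; $\mathbb P$ outputs PASS iff none of these is FAIL and $A^jW_i=M^j_i$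 for all $i,j$ (otherwise it outputs FAIL). *)

theory Defs
  imports Complex_Main
begin

text \<open>Matrices are functions nat => nat => real; an m x n matrix uses indices
  i < m (rows) and j < n (columns); [k] is rendered as {0..<k}.
  Vectors in R^r are functions nat => real with indices k < r.\<close>

definition nonneg_mat :: "nat \<Rightarrow> nat \<Rightarrow> (nat \<Rightarrow> nat \<Rightarrow> real) \<Rightarrow> bool" where
  "nonneg_mat m n M \<longleftrightarrow> (\<forall>i<m. \<forall>j<n. M i j \<ge> 0)"

definition nonneg_factorization ::
  "nat \<Rightarrow> nat \<Rightarrow> (nat \<Rightarrow> nat \<Rightarrow> real) \<Rightarrow> nat \<Rightarrow> bool" where
  "nonneg_factorization m n M r \<longleftrightarrow>
     (\<exists>A W. nonneg_mat m r A \<and> nonneg_mat r n W \<and>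
        (\<forall>i<m. \<forall>j<n. M i j = (\<Sum>k<r. A i k * W k j)))"

definition nonneg_rank :: "nat \<Rightarrow> nat \<Rightarrow> (nat \<Rightarrow> nat \<Rightarrow> real) \<Rightarrow> nat" where
  "nonneg_rank m n M = (LEAST r. nonneg_factorization m n M r)"

definition nonneg_vec :: "nat \<Rightarrow> (nat \<Rightarrow> real) \<Rightarrow> bool" where
  "nonneg_vec r v \<longleftrightarrow> (\<forall>k<r. v k \<ge> 0)"

definition supp :: "nat \<Rightarrow> (nat \<Rightarrow> real) \<Rightarrow> nat set" where
  "supp r v = {k. k < r \<and> v k \<noteq> 0}"

definition lex_less :: "nat set \<Rightarrow> nat set \<Rightarrow> bool" where
  "lex_less S T \<longleftrightarrow> card S < card T \<or>
     (card S = card T \<and>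
      (sorted_list_of_set S, sorted_list_of_set T) \<in> lexord {(a, b). a < b})"

definition first_ok :: "nat \<Rightarrow> nat \<Rightarrow> (nat \<Rightarrow> nat \<Rightarrow> real) \<Rightarrow> nat \<Rightarrow> bool" where
  "first_ok r p vs l \<longleftrightarrow> l < p \<and> nonneg_vec r (vs l) \<and>
     (\<forall>l'<p. nonneg_vec r (vs l') \<longrightarrow>
        \<not> lex_less (supp r (vs l')) (supp r (vs l)) \<and>
        (supp r (vs l') = supp r (vs l) \<longrightarrow> (\<forall>k<r. vs l' k = vs l k)))"

text \<open>first: None encodes FAIL.\<close>
definition first :: "nat \<Rightarrow> nat \<Rightarrow> (nat \<Rightarrow> nat \<Rightarrow> real) \<Rightarrow> (nat \<Rightarrow> real) option" where
  "first r p vs =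
     (if \<exists>l. first_ok r p vs l
      then Some (\<lambda>k. if k < r then vs (SOME l. first_ok r p vs l) k else 0)
      else None)"

definition elem :: "nat set \<Rightarrow> nat \<Rightarrow> nat" where
  "elem U a = sorted_list_of_set U ! a"

text \<open>B M_i^U for an r x s matrix B, where s = card U.\<close>
definition colvec :: "nat \<Rightarrow> (nat \<Rightarrow> nat \<Rightarrow> real) \<Rightarrow> nat set \<Rightarrow>
    (nat \<Rightarrow> nat \<Rightarrow> real) \<Rightarrow> nat \<Rightarrow> nat \<Rightarrow> real" where
  "colvec r M U B i = (\<lambda>k. \<Sum>a<card U. B k a * M (elem U a) i)"

text \<open>M^j_V C for a t x r matrix C, where t = card V.\<close>
definition rowvec :: "nat \<Rightarrow> (nat \<Rightarrow> nat \<Rightarrow> real) \<Rightarrow> nat set \<Rightarrow>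
    (nat \<Rightarrow> nat \<Rightarrow> real) \<Rightarrow> nat \<Rightarrow> nat \<Rightarrow> real" where
  "rowvec r M V C j = (\<lambda>k. \<Sum>b<card V. M j (elem V b) * C b k)"

text \<open>The test P: Bs l is B_{l+1} (l < p), Cs l is C_{l+1} (l < q).\<close>
definition test_P :: "nat \<Rightarrow> nat \<Rightarrow> nat \<Rightarrow> (nat \<Rightarrow> nat \<Rightarrow> real) \<Rightarrow> nat set \<Rightarrow> nat set \<Rightarrow>
    nat \<Rightarrow> nat \<Rightarrow> (nat \<Rightarrow> nat \<Rightarrow> nat \<Rightarrow> real) \<Rightarrow> (nat \<Rightarrow> nat \<Rightarrow> nat \<Rightarrow> real) \<Rightarrow> bool" where
  "test_P m n r M U V p q Bs Cs \<longleftrightarrow>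
     (let W = (\<lambda>i. first r p (\<lambda>l. colvec r M U (Bs l) i));
          A = (\<lambda>j. first r q (\<lambda>l. rowvec r M V (Cs l) j))
      in (\<forall>i<n. W i \<noteq> None) \<and> (\<forall>j<m. A j \<noteq> None) \<and>
         (\<forall>i<n. \<forall>j<m. (\<Sum>k<r. the (A j) k * the (W i) k) = M j i))"

end

theory Submission
  imports Defs "HOL-Library.Function_Algebras"
begin

text \<open>Let \<open>M = A W\<close> with \<open>A, W \<ge> 0\<close> of inner dimension \<open>r\<close>, and let \<open>U\<close> index a basis of
  the row space of \<open>A\<close>.  Every basis \<open>S\<close> chosen among the columns of \<open>A\<^sub>U\<close> has \<open>|U|\<close>
  elements, so there are at most \<open>r choose |U|\<close> of them, and the matrix \<open>B\<^sub>S\<close> sending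
  \<open>M\<^sub>i\<^sup>U\<close> to its coordinates in \<open>S\<close> produces solutions \<open>w\<close> of \<open>A w = M\<^sub>i\<close>.  Since \<open>M\<^sub>i\<close> is
  a nonnegative combination of the columns of \<open>A\<close>, Caratheodory's theorem makes one of these
  candidates nonnegative, and two nonnegative candidates with the same support coincide because
  that support is independent; so \<open>first\<close> returns nonnegative columns \<open>W'\<close> with \<open>M = A W'\<close>.
  The same argument applied to \<open>M\<^sup>T = W'\<^sup>T A\<^sup>T\<close> recovers nonnegative rows \<open>A'\<close>, and then
  \<open>A' W' = M\<close>.  Conversely, a passing test exhibits a nonnegative factorization of inner
  dimension \<open>r\<close>.\<close>

section \<open>Linear combinations of indexed families\<close>

interpretation fun_vector: vector_space "\<lambda>(c::real) (f::nat \<Rightarrow> real). (\<lambda>x. c * f x)"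
  by unfold_locales (auto simp: fun_eq_iff algebra_simps)

lemma sum_fun_apply: "(sum f S :: nat \<Rightarrow> real) x = (\<Sum>k\<in>S. f k x)"
  by (induction S rule: infinite_finite_induct) auto

definition lincomb :: "(nat \<Rightarrow> real) \<Rightarrow> (nat \<Rightarrow> nat \<Rightarrow> real) \<Rightarrow> nat set \<Rightarrow> nat \<Rightarrow> real" where
  "lincomb c f S = (\<lambda>x. \<Sum>k\<in>S. c k * f k x)"

definition lin_indep :: "(nat \<Rightarrow> nat \<Rightarrow> real) \<Rightarrow> nat set \<Rightarrow> bool" where
  "lin_indep f S \<longleftrightarrow> (\<forall>c. lincomb c f S = 0 \<longrightarrow> (\<forall>k\<in>S. c k = 0))"

lemma lincomb_eq_sum: "lincomb c f S = (\<Sum>k\<in>S. (\<lambda>x. c k * f k x))"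
  by (simp add: lincomb_def fun_eq_iff sum_fun_apply)

lemma lincomb_in_span: "lincomb c f S \<in> fun_vector.span (f ` S)"
  unfolding lincomb_eq_sum by (intro fun_vector.span_sum fun_vector.span_scale fun_vector.span_base) auto

lemma lincomb_cong:
  "(\<And>k. k \<in> S \<Longrightarrow> c k = d k) \<Longrightarrow> (\<And>k. k \<in> S \<Longrightarrow> f k = g k) \<Longrightarrow> lincomb c f S = lincomb d g S"
  unfolding lincomb_def by (intro ext sum.cong) auto

lemma lincomb_mono_neutral:
  "finite I \<Longrightarrow> T \<subseteq> I \<Longrightarrow> (\<And>k. k \<in> I - T \<Longrightarrow> c k = 0) \<Longrightarrow> lincomb c f I = lincomb c f T"
  unfolding lincomb_def by (intro ext sum.mono_neutral_right) auto

lemma lincomb_diff: "lincomb (\<lambda>k. c k - d k) f S = lincomb c f S - lincomb d f S"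
  by (simp add: lincomb_def fun_eq_iff sum_subtractf left_diff_distrib)

lemma lincomb_scale: "lincomb (\<lambda>k. t * c k) f S = (\<lambda>x. t * lincomb c f S x)"
  by (simp add: lincomb_def sum_distrib_left mult.assoc)

lemma lincomb_insert:
  "finite S \<Longrightarrow> k \<notin> S \<Longrightarrow> lincomb c f (insert k S) = (\<lambda>x. c k * f k x + lincomb c f S x)"
  by (simp add: lincomb_def)

lemma lincomb_single: "finite S \<Longrightarrow> k \<in> S \<Longrightarrow> f k = lincomb (\<lambda>j. if j = k then 1 else 0) f S"
  by (simp add: lincomb_def fun_eq_iff if_distrib[of "\<lambda>c. c * _"] sum.delta' cong: if_cong)

definition unit_vec :: "nat \<Rightarrow> nat \<Rightarrow> real" where
  "unit_vec a = (\<lambda>x. if x = a then 1 else 0)"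

lemma lincomb_unit_vec: "finite G \<Longrightarrow> (\<And>x. x \<notin> G \<Longrightarrow> v x = 0) \<Longrightarrow> v = lincomb v unit_vec G"
  by (auto simp: lincomb_def unit_vec_def fun_eq_iff if_distrib sum.delta cong: if_cong)

lemma lin_indep_empty: "lin_indep f {}"
  by (simp add: lin_indep_def)

lemma lin_indep_inj_on:
  assumes "lin_indep f S" "finite S"
  shows "inj_on f S"
proof (rule inj_onI, rule ccontr)
  fix a b assume ab: "a \<in> S" "b \<in> S" "f a = f b" "a \<noteq> b"
  define c where "c = (\<lambda>k. if k = a then (1::real) else if k = b then -1 else 0)"
  have "lincomb c f S = lincomb c f {a, b}"
    using assms(2) ab by (intro lincomb_mono_neutral) (auto simp: c_def)
  also have "\<dots> = 0" using ab by (simp add: lincomb_def c_def fun_eq_iff)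
  finally have "c a = 0" using assms(1) ab unfolding lin_indep_def by blast
  thus False by (simp add: c_def)
qed

lemma lin_indep_imp_independent:
  assumes "lin_indep f S" "finite S"
  shows "fun_vector.independent (f ` S)"
proof
  assume "fun_vector.dependent (f ` S)"
  then obtain u where u: "\<exists>v\<in>f ` S. u v \<noteq> 0" "(\<Sum>v\<in>f ` S. (\<lambda>x. u v * v x)) = 0"
    using fun_vector.dependent_finite assms(2) by auto
  have "lincomb (u \<circ> f) f S = 0"
    using u(2) unfolding lincomb_eq_sum sum.reindex[OF lin_indep_inj_on[OF assms]] by (simp add: o_def)
  then have "\<forall>k\<in>S. u (f k) = 0" using assms(1) unfolding lin_indep_def by auto
  thus False using u(1) by auto
qed

lemma lin_indep_card_le:
  assumes "lin_indep f S" "finite S" "finite G" "\<And>k. k \<in> S \<Longrightarrow> \<exists>c. f k = lincomb c g G"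
  shows "card S \<le> card G"
proof -
  have "f ` S \<subseteq> fun_vector.span (g ` G)"
    using assms(4) lincomb_in_span by (fastforce simp del: lincomb_def)
  then have "card (f ` S) \<le> card (g ` G)"
    using fun_vector.independent_span_bound[OF finite_imageI[OF assms(3)]
        lin_indep_imp_independent[OF assms(1,2)]] by simp
  also have "\<dots> \<le> card G" by (rule card_image_le[OF assms(3)])
  finally show ?thesis using card_image[OF lin_indep_inj_on[OF assms(1,2)]] by simp
qed

lemma lin_indep_subset:
  assumes "lin_indep f S" "T \<subseteq> S" "finite S"
  shows "lin_indep f T"
  unfolding lin_indep_def
proof (intro allI impI ballI)
  fix c k assume c: "lincomb c f T = 0" and k: "k \<in> T"
  define c' where "c' = (\<lambda>j. if j \<in> T then c j else 0)"
  have "lincomb c' f S = lincomb c' f T" using assms by (intro lincomb_mono_neutral) (auto simp: c'_def)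
  also have "\<dots> = lincomb c f T" by (intro lincomb_cong) (auto simp: c'_def)
  finally have "lincomb c' f S = 0" using c by simp
  then have "c' k = 0" using assms(1,2) k unfolding lin_indep_def by blast
  thus "c k = 0" using k by (simp add: c'_def)
qed

lemma lin_indep_coeffs_eq:
  assumes "lin_indep f S" "lincomb c f S = lincomb d f S" "k \<in> S"
  shows "c k = d k"
proof -
  have "lincomb (\<lambda>k. c k - d k) f S = 0" using assms(2) by (simp add: lincomb_diff)
  thus ?thesis using assms(1,3) unfolding lin_indep_def by fastforce
qed

lemma lin_indep_insert:
  assumes "finite S" "lin_indep f S" "k \<notin> S" "\<nexists>c. f k = lincomb c f S"
  shows "lin_indep f (insert k S)"
  unfolding lin_indep_def
proof (intro allI impI)
  fix c assume c: "lincomb c f (insert k S) = 0"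
  then have sum0: "c k * f k x + lincomb c f S x = 0" for x
    using lincomb_insert[OF assms(1,3)] by (metis zero_fun_def)
  have ck: "c k = 0"
  proof (rule ccontr)
    assume "c k \<noteq> 0"
    then have "f k = lincomb (\<lambda>j. - c j / c k) f S"
      using sum0 by (auto simp: lincomb_def fun_eq_iff sum_divide_distrib[symmetric] sum_negf field_simps)
        (metis add.commute add_eq_0_iff2 mult.commute)
    thus False using assms(4) by blast
  qed
  then have "lincomb c f S = 0" using sum0 by (simp add: fun_eq_iff)
  then show "\<forall>j\<in>insert k S. c j = 0" using ck assms(2) unfolding lin_indep_def by blast
qed

lemma lin_indep_extend:
  assumes "finite I" "T \<subseteq> I" "lin_indep f T"
  shows "\<exists>S. T \<subseteq> S \<and> S \<subseteq> I \<and> lin_indep f S \<and> (\<forall>k\<in>I. \<exists>c. f k = lincomb c f S)"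
  using assms
proof (induction "card (I - T)" arbitrary: T rule: less_induct)
  case less
  show ?case
  proof (cases "\<forall>k\<in>I. \<exists>c. f k = lincomb c f T")
    case False
    then obtain k where k: "k \<in> I" "\<nexists>c. f k = lincomb c f T" by blast
    have fT: "finite T" using finite_subset less.prems(1,2) by blast
    have kT: "k \<notin> T" using k(2) lincomb_single[OF fT, of k f] by blast
    have "card (I - insert k T) < card (I - T)"
      using k(1) kT less.prems(1) by (intro psubset_card_mono) auto
    moreover have "lin_indep f (insert k T)" using lin_indep_insert[OF fT less.prems(3) kT k(2)] .
    ultimately obtain S where "insert k T \<subseteq> S" "S \<subseteq> I" "lin_indep f S"
        "\<forall>k\<in>I. \<exists>c. f k = lincomb c f S"
      using less.hyps[of "insert k T"] less.prems(1,2) k(1) by auto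
    then show ?thesis by blast
  qed (use less.prems in blast)
qed

text \<open>Adjoining \<open>v\<close> to the family would give more independent vectors than \<open>card G\<close>.\<close>
lemma lin_indep_spans:
  assumes "lin_indep f S" "finite S" "finite G" "card G \<le> card S"
    "\<And>k x. k \<in> S \<Longrightarrow> x \<notin> G \<Longrightarrow> f k x = 0" "\<And>x. x \<notin> G \<Longrightarrow> v x = 0"
  shows "\<exists>c. v = lincomb c f S"
proof (rule ccontr)
  assume nv: "\<nexists>c. v = lincomb c f S"
  obtain k where k: "k \<notin> S" using assms(2) ex_new_if_finite infinite_UNIV_nat by blast
  define f' where "f' = f(k := v)"
  have f'_eq: "lincomb c f' S = lincomb c f S" for c using k by (intro lincomb_cong) (auto simp: f'_def)
  have "lin_indep f' S" using assms(1) unfolding lin_indep_def f'_eq .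
  moreover have "\<nexists>c. f' k = lincomb c f' S" using nv f'_eq by (simp add: f'_def)
  ultimately have "lin_indep f' (insert k S)" using lin_indep_insert[OF assms(2) _ k] by blast
  then have "card (insert k S) \<le> card G"
  proof (rule lin_indep_card_le[where g = unit_vec])
    fix j assume "j \<in> insert k S"
    then have "\<And>x. x \<notin> G \<Longrightarrow> f' j x = 0" using assms(5,6) by (auto simp: f'_def)
    then show "\<exists>c. f' j = lincomb c unit_vec G" using lincomb_unit_vec[OF assms(3)] by blast
  qed (use assms in auto)
  thus False using assms(2,4) k by simp
qed

lemma dependent_imp_positive_dependence:
  assumes "\<not> lin_indep f T"
  shows "\<exists>c. lincomb c f T = 0 \<and> (\<exists>k\<in>T. c k > 0)"
proof -
  obtain c k where c: "lincomb c f T = 0" "k \<in> T" "c k \<noteq> 0"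
    using assms unfolding lin_indep_def by blast
  show ?thesis
  proof (cases "c k > 0")
    case False
    then have "lincomb (\<lambda>j. -1 * c j) f T = 0" "-1 * c k > 0"
      using c lincomb_scale[of "-1" c f T] by (auto simp: fun_eq_iff)
    then show ?thesis using c(2) by blast
  qed (use c in blast)
qed

section \<open>Caratheodory's theorem for cones\<close>

text \<open>One step of Caratheodory's argument: move along a linear dependence among the support
  until the first coordinate hits zero.\<close>
lemma nonneg_lincomb_shrink_support:
  assumes "finite I" "\<forall>k\<in>I. x k \<ge> 0" "\<not> lin_indep f {k\<in>I. x k \<noteq> 0}"
  shows "\<exists>x'. (\<forall>k\<in>I. x' k \<ge> 0) \<and> lincomb x' f I = lincomb x f I \<and>
    card {k\<in>I. x' k \<noteq> 0} < card {k\<in>I. x k \<noteq> 0}"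
proof -
  define T where "T = {k\<in>I. x k \<noteq> 0}"
  have fT: "finite T" "T \<subseteq> I" using assms(1) by (auto simp: T_def)
  obtain c0 where c0: "lincomb c0 f T = 0" "\<exists>k\<in>T. c0 k > 0"
    using dependent_imp_positive_dependence assms(3) unfolding T_def by blast
  define c where "c k = (if k \<in> T then c0 k else 0)" for k
  have "lincomb c f I = lincomb c f T" using fT assms(1) by (intro lincomb_mono_neutral) (auto simp: c_def)
  also have "\<dots> = lincomb c0 f T" by (intro lincomb_cong) (auto simp: c_def)
  finally have c_I: "lincomb c f I = 0" using c0(1) by simp
  define P where "P = {k\<in>T. c k > 0}"
  have fP: "finite P" "P \<noteq> {}" using fT c0(2) by (auto simp: P_def c_def)
  define t where "t = Min ((\<lambda>k. x k / c k) ` P)"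
  have "t \<in> (\<lambda>k. x k / c k) ` P" unfolding t_def using fP by (intro Min_in) auto
  then obtain k0 where k0: "k0 \<in> P" "t = x k0 / c k0" by blast
  have t_le: "t \<le> x k / c k" if "k \<in> P" for k using that fP unfolding t_def by simp
  have t_nonneg: "t \<ge> 0" using k0 assms(2) fT by (auto simp: P_def)
  define x' where "x' = (\<lambda>k. x k - t * c k)"
  have "x' k \<ge> 0" if "k \<in> I" for k
  proof (cases "c k > 0")
    case True
    then have "k \<in> P" by (auto simp: P_def c_def split: if_splits)
    then have "t * c k \<le> x k" using t_le[of k] True by (simp add: field_simps)
    then show ?thesis by (simp add: x'_def)
  next
    case False
    then have "t * c k \<le> 0" using t_nonneg by (simp add: mult_nonneg_nonpos)
    moreover have "x k \<ge> 0" using assms(2) that by blast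
    ultimately show ?thesis by (simp add: x'_def)
  qed
  moreover have "lincomb x' f I = lincomb x f I"
    using c_I lincomb_diff[of x "\<lambda>k. t * c k" f I] lincomb_scale[of t c f I]
    by (simp add: x'_def fun_eq_iff)
  moreover have "card {k\<in>I. x' k \<noteq> 0} < card T"
  proof -
    have "x' k0 = 0" using k0 by (auto simp: x'_def P_def)
    moreover have "x' k = 0" if "k \<in> I" "k \<notin> T" for k
      using that by (simp add: x'_def c_def T_def)
    ultimately have "{k\<in>I. x' k \<noteq> 0} \<subseteq> T - {k0}" by blast
    then have "card {k\<in>I. x' k \<noteq> 0} \<le> card (T - {k0})" using fT by (intro card_mono) auto
    also have "\<dots> < card T" using k0 fT by (intro psubset_card_mono) (auto simp: P_def)
    finally show ?thesis .
  qed
  ultimately show ?thesis unfolding T_def by blast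
qed

lemma conic_caratheodory:
  assumes "finite I" "\<forall>k\<in>I. x k \<ge> 0"
  shows "\<exists>z. (\<forall>k\<in>I. z k \<ge> 0) \<and> lincomb z f I = lincomb x f I \<and> lin_indep f {k\<in>I. z k \<noteq> 0}"
  using assms(2)
proof (induction "card {k\<in>I. x k \<noteq> 0}" arbitrary: x rule: less_induct)
  case less
  show ?case
  proof (cases "lin_indep f {k\<in>I. x k \<noteq> 0}")
    case False
    then obtain x' where x': "\<forall>k\<in>I. x' k \<ge> 0" "lincomb x' f I = lincomb x f I"
        "card {k\<in>I. x' k \<noteq> 0} < card {k\<in>I. x k \<noteq> 0}"
      using nonneg_lincomb_shrink_support[OF assms(1) less.prems] by blast
    then show ?thesis using less.hyps[OF x'(3) x'(1)] by auto
  qed (use less.prems in blast)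
qed

section \<open>Coordinates with respect to bases\<close>

definition coords :: "(nat \<Rightarrow> nat \<Rightarrow> real) \<Rightarrow> nat set \<Rightarrow> (nat \<Rightarrow> real) \<Rightarrow> nat \<Rightarrow> real" where
  "coords f S v = (\<lambda>k. if k \<in> S then (SOME c. v = lincomb c f S) k else 0)"

lemma lincomb_coords: "\<exists>c. v = lincomb c f S \<Longrightarrow> lincomb (coords f S v) f S = v"
proof -
  assume "\<exists>c. v = lincomb c f S"
  then have "v = lincomb (SOME c. v = lincomb c f S) f S" by (rule someI_ex)
  also have "\<dots> = lincomb (coords f S v) f S" by (intro lincomb_cong) (auto simp: coords_def)
  finally show ?thesis by simp
qed

lemma coords_eqI:
  assumes "lin_indep f S" "v = lincomb c f S" "\<And>k. k \<notin> S \<Longrightarrow> c k = 0"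
  shows "coords f S v = c"
proof
  fix k
  show "coords f S v k = c k"
  proof (cases "k \<in> S")
    case True
    have "lincomb (coords f S v) f S = lincomb c f S" using lincomb_coords assms(2) by blast
    then show ?thesis using lin_indep_coeffs_eq[OF assms(1)] True by blast
  qed (simp add: coords_def assms(3))
qed

lemma coords_sum:
  assumes "lin_indep f S" "\<And>u. u \<in> U \<Longrightarrow> \<exists>c. v u = lincomb c f S"
  shows "coords f S (\<lambda>x. \<Sum>u\<in>U. a u * v u x) = (\<lambda>k. \<Sum>u\<in>U. a u * coords f S (v u) k)"
proof (rule coords_eqI[OF assms(1)])
  show "(\<lambda>x. \<Sum>u\<in>U. a u * v u x) = lincomb (\<lambda>k. \<Sum>u\<in>U. a u * coords f S (v u) k) f S"
  proof
    fix x
    have "lincomb (\<lambda>k. \<Sum>u\<in>U. a u * coords f S (v u) k) f S x =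
        (\<Sum>u\<in>U. a u * lincomb (coords f S (v u)) f S x)"
      by (simp add: lincomb_def sum_distrib_left sum_distrib_right mult.assoc sum.swap[of _ S])
    also have "\<dots> = (\<Sum>u\<in>U. a u * v u x)" using lincomb_coords assms(2) by simp
    finally show "(\<Sum>u\<in>U. a u * v u x) = lincomb (\<lambda>k. \<Sum>u\<in>U. a u * coords f S (v u) k) f S x" ..
  qed
qed (simp add: coords_def)

lemma lincomb_same_support_eq:
  assumes "lin_indep f S" "finite S" "finite S'"
    "\<And>k. k \<notin> S \<Longrightarrow> c k = 0" "\<And>k. k \<notin> S' \<Longrightarrow> d k = 0"
    "{k. c k \<noteq> 0} = {k. d k \<noteq> 0}" "lincomb c f S = lincomb d f S'"
  shows "c = d"
proof
  define T where "T = {k. c k \<noteq> 0}"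
  have T: "T \<subseteq> S" "T \<subseteq> S'" using assms(4-6) by (auto simp: T_def)
  have "lincomb c f T = lincomb c f S"
    by (rule lincomb_mono_neutral[OF assms(2) T(1), symmetric]) (simp add: T_def)
  also have "\<dots> = lincomb d f S'" by (rule assms(7))
  also have "\<dots> = lincomb d f T"
    by (rule lincomb_mono_neutral[OF assms(3) T(2)]) (use assms(6) in \<open>auto simp: T_def\<close>)
  finally have "lincomb c f T = lincomb d f T" .
  then have on_T: "c k = d k" if "k \<in> T" for k
    using lin_indep_coeffs_eq[OF lin_indep_subset[OF assms(1) T(1) assms(2)]] that by blast
  fix k
  show "c k = d k" using on_T[of k] assms(6) by (cases "k \<in> T") (auto simp: T_def)
qed


definition basis_among :: "(nat \<Rightarrow> nat \<Rightarrow> real) \<Rightarrow> nat set \<Rightarrow> nat set \<Rightarrow> bool" where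
  "basis_among f I S \<longleftrightarrow> S \<subseteq> I \<and> lin_indep f S \<and> (\<forall>k\<in>I. \<exists>c. f k = lincomb c f S)"

lemma basis_among_lincomb:
  assumes "basis_among f I S"
  shows "\<exists>d. lincomb c f I = lincomb d f S"
proof -
  obtain e where e: "\<And>k. k \<in> I \<Longrightarrow> f k = lincomb (e k) f S"
    using assms unfolding basis_among_def by metis
  have "lincomb c f I x = lincomb (\<lambda>j. \<Sum>k\<in>I. c k * e k j) f S x" for x
  proof -
    have "lincomb c f I x = (\<Sum>k\<in>I. \<Sum>j\<in>S. c k * e k j * f j x)"
      unfolding lincomb_def by (intro sum.cong) (auto simp: e lincomb_def sum_distrib_left mult.assoc)
    also have "\<dots> = lincomb (\<lambda>j. \<Sum>k\<in>I. c k * e k j) f S x"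
      by (simp add: lincomb_def sum_distrib_right sum.swap[of _ I])
    finally show ?thesis .
  qed
  then show ?thesis by blast
qed

lemma exists_basis_nonneg_coords:
  assumes "finite I" "\<forall>k\<in>I. y k \<ge> 0"
  shows "\<exists>S. basis_among f I S \<and> (\<forall>k. coords f S (lincomb y f I) k \<ge> 0)"
proof -
  obtain z where z: "\<forall>k\<in>I. z k \<ge> 0" "lincomb z f I = lincomb y f I" "lin_indep f {k\<in>I. z k \<noteq> 0}"
    using conic_caratheodory[OF assms] by blast
  have "{k\<in>I. z k \<noteq> 0} \<subseteq> I" by blast
  from lin_indep_extend[OF assms(1) this z(3)] obtain S where S: "{k\<in>I. z k \<noteq> 0} \<subseteq> S"
      and SI: "S \<subseteq> I" "lin_indep f S" and "\<forall>k\<in>I. \<exists>c. f k = lincomb c f S"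
    by blast
  then have basis: "basis_among f I S" by (simp add: basis_among_def)
  define z' where "z' k = (if k \<in> S then z k else 0)" for k
  have "lincomb y f I = lincomb z f I" using z(2) by simp
  also have "\<dots> = lincomb z f {k\<in>I. z k \<noteq> 0}" by (rule lincomb_mono_neutral[OF assms(1)]) auto
  also have "\<dots> = lincomb z f S"
    using S SI(1) finite_subset[OF SI(1) assms(1)] by (intro lincomb_mono_neutral[symmetric]) auto
  also have "\<dots> = lincomb z' f S" by (intro lincomb_cong) (auto simp: z'_def)
  finally have "coords f S (lincomb y f I) = z'"
    by (rule coords_eqI[OF SI(2)]) (simp add: z'_def)
  moreover have "z' k \<ge> 0" for k using z(1) SI(1) by (auto simp: z'_def)
  ultimately show ?thesis using basis by auto
qed

text \<open>Row rank equals column rank: if the rows indexed by \<open>U\<close> are independent, every basis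
  chosen among the columns has \<open>card U\<close> elements.\<close>
lemma basis_among_card_eq:
  assumes "finite U" "finite I" "\<And>k x. k \<in> I \<Longrightarrow> x \<notin> U \<Longrightarrow> f k x = 0"
    and rows_indep: "\<And>c. \<forall>k\<in>I. (\<Sum>u\<in>U. c u * f k u) = 0 \<Longrightarrow> \<forall>u\<in>U. c u = 0"
    and "basis_among f I S"
  shows "card S = card U"
proof -
  obtain e where e: "\<And>k. k \<in> I \<Longrightarrow> f k = lincomb (e k) f S" and S: "S \<subseteq> I" "lin_indep f S"
    using assms(5) unfolding basis_among_def by metis
  have fS: "finite S" using S(1) assms(2) finite_subset by blast
  have "card S \<le> card U"
    using lin_indep_card_le[OF S(2) fS assms(1), of unit_vec] lincomb_unit_vec[OF assms(1)] assms(3) S(1)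
    by blast
  moreover have "card U \<le> card S"
  proof -
    define row where "row u = (\<lambda>k. if k \<in> S then f k u else 0)" for u
    have "lin_indep row U" unfolding lin_indep_def
    proof (intro allI impI)
      fix c assume c: "lincomb c row U = 0"
      have on_S: "(\<Sum>u\<in>U. c u * f l u) = 0" if "l \<in> S" for l
        using fun_cong[OF c, of l] that by (simp add: lincomb_def row_def)
      have "(\<Sum>u\<in>U. c u * f k u) = 0" if "k \<in> I" for k
      proof -
        have "(\<Sum>u\<in>U. c u * f k u) = (\<Sum>u\<in>U. \<Sum>l\<in>S. e k l * (c u * f l u))"
          by (simp add: e[OF that] lincomb_def sum_distrib_left mult.left_commute)
        also have "\<dots> = (\<Sum>l\<in>S. e k l * (\<Sum>u\<in>U. c u * f l u))"
          by (subst sum.swap) (simp add: sum_distrib_left)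
        finally show ?thesis using on_S by simp
      qed
      then show "\<forall>u\<in>U. c u = 0" using rows_indep by blast
    qed
    moreover have "\<exists>c. row u = lincomb c unit_vec S" for u
      by (rule exI, rule lincomb_unit_vec[OF fS]) (simp add: row_def)
    ultimately show ?thesis using lin_indep_card_le[OF _ assms(1) fS] by blast
  qed
  ultimately show ?thesis by simp
qed

lemma basis_among_spans_support:
  assumes "finite U" "finite I" "\<And>k x. k \<in> I \<Longrightarrow> x \<notin> U \<Longrightarrow> f k x = 0"
    and "\<And>c. \<forall>k\<in>I. (\<Sum>u\<in>U. c u * f k u) = 0 \<Longrightarrow> \<forall>u\<in>U. c u = 0"
    and "basis_among f I S" "\<And>x. x \<notin> U \<Longrightarrow> v x = 0"
  shows "lincomb (coords f S v) f S = v"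
proof -
  have S: "S \<subseteq> I" "lin_indep f S" using assms(5) by (auto simp: basis_among_def)
  have "\<exists>c. v = lincomb c f S"
    by (rule lin_indep_spans[OF S(2) finite_subset[OF S(1) assms(2)] assms(1)])
      (use assms(3,6) S(1) basis_among_card_eq[OF assms(1-5)] in auto)
  then show ?thesis by (rule lincomb_coords)
qed



section \<open>The selection rule \<open>first\<close>\<close>

lemma lex_less_irrefl: "\<not> lex_less S S"
proof -
  have "(sorted_list_of_set S, sorted_list_of_set S) \<notin> lexord {(a::nat, b). a < b}"
    by (rule lexord_irreflexive) simp
  then show ?thesis unfolding lex_less_def by simp
qed

lemma lex_less_trans:
  assumes "lex_less S T" "lex_less T U"
  shows "lex_less S U"
proof -
  have tr: "trans {(a::nat, b). a < b}" by (auto simp: trans_def)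
  show ?thesis
    using assms lexord_trans[OF _ _ tr, of "sorted_list_of_set S" "sorted_list_of_set T"
        "sorted_list_of_set U"]
    unfolding lex_less_def by linarith
qed

lemma finite_has_minimal_wrt:
  assumes "finite X" "X \<noteq> {}" "\<And>x. \<not> R x x" "\<And>x y z. R x y \<Longrightarrow> R y z \<Longrightarrow> R x z"
  shows "\<exists>x\<in>X. \<forall>y\<in>X. \<not> R y x"
  using assms(1,2)
proof (induction X rule: finite_ne_induct)
  case (insert x X)
  then obtain m where m: "m \<in> X" "\<forall>y\<in>X. \<not> R y m" by blast
  show ?case
  proof (cases "R x m")
    case True
    then have "\<forall>y\<in>insert x X. \<not> R y x" using m assms(3,4) by blast
    then show ?thesis by blast
  qed (use m in blast)
qed (use assms(3) in auto)

lemma first_eq_Some: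
  assumes "\<exists>l<p. nonneg_vec r (vs l)"
    and tie: "\<And>l l'. l < p \<Longrightarrow> l' < p \<Longrightarrow> nonneg_vec r (vs l) \<Longrightarrow> nonneg_vec r (vs l') \<Longrightarrow>
       supp r (vs l) = supp r (vs l') \<Longrightarrow> \<forall>k<r. vs l k = vs l' k"
  shows "\<exists>l<p. nonneg_vec r (vs l) \<and> first r p vs = Some (\<lambda>k. if k < r then vs l k else 0)"
proof -
  define X where "X = {l. l < p \<and> nonneg_vec r (vs l)}"
  have "finite X" "X \<noteq> {}" using assms(1) by (auto simp: X_def)
  from finite_has_minimal_wrt[OF this, of "\<lambda>l' l. lex_less (supp r (vs l')) (supp r (vs l))"]
  obtain l where l: "l \<in> X" "\<forall>l'\<in>X. \<not> lex_less (supp r (vs l')) (supp r (vs l))"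
    using lex_less_irrefl lex_less_trans by blast
  have ok: "first_ok r p vs l" unfolding first_ok_def
  proof (intro conjI allI impI)
    show "l < p" "nonneg_vec r (vs l)" using l(1) by (auto simp: X_def)
  next
    fix l' assume "l' < p" "nonneg_vec r (vs l')"
    then have "l' \<in> X" by (simp add: X_def)
    then show "\<not> lex_less (supp r (vs l')) (supp r (vs l))" using l(2) by blast
  next
    fix l' k assume "l' < p" "nonneg_vec r (vs l')" "supp r (vs l') = supp r (vs l)" "k < r"
    then show "vs l' k = vs l k" using tie[of l' l] l(1) by (simp add: X_def)
  qed
  define l0 where "l0 = (SOME l. first_ok r p vs l)"
  have "first_ok r p vs l0" unfolding l0_def using ok by (rule someI)
  then have "l0 < p" "nonneg_vec r (vs l0)" unfolding first_ok_def by simp_all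
  moreover have "first r p vs = Some (\<lambda>k. if k < r then vs l0 k else 0)"
    using ok unfolding first_def l0_def by auto
  ultimately show ?thesis by blast
qed

lemma first_Some_nonneg:
  assumes "first r p vs = Some w"
  shows "nonneg_vec r w"
proof -
  have ex: "\<exists>l. first_ok r p vs l"
    using assms unfolding first_def by (auto split: if_splits)
  define l0 where "l0 = (SOME l. first_ok r p vs l)"
  have "first_ok r p vs l0" unfolding l0_def using ex by (rule someI_ex)
  then have "nonneg_vec r (vs l0)" unfolding first_ok_def by simp
  moreover have "w = (\<lambda>k. if k < r then vs l0 k else 0)"
    using assms ex unfolding first_def l0_def by simp
  ultimately show ?thesis by (simp add: nonneg_vec_def)
qed

lemma first_cong:
  assumes "\<And>l. l < p \<Longrightarrow> vs l = vs' l"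
  shows "first r p vs = first r p vs'"
proof -
  have "first_ok r p vs l = first_ok r p vs' l" for l
    by (simp add: first_ok_def assms cong: conj_cong imp_cong)
  then have ok: "first_ok r p vs = first_ok r p vs'" by blast
  show ?thesis
  proof (cases "\<exists>l. first_ok r p vs' l")
    case True
    then have "(SOME l. first_ok r p vs' l) < p" using someI_ex[OF True] unfolding first_ok_def by blast
    then show ?thesis unfolding first_def ok using True assms by auto
  qed (simp add: first_def ok)
qed

text \<open>Nonnegative coordinates exist by Caratheodory, and two nonnegative coordinate vectors with
  the same support agree because that support is independent.\<close>
lemma first_coords_nonneg:
  assumes g: "bij_betw g {..<p} {S. basis_among f {..<r} S}" and y: "\<forall>k<r. y k \<ge> 0"
  defines "b \<equiv> lincomb y f {..<r}"
  shows "\<exists>S. basis_among f {..<r} S \<and> nonneg_vec r (coords f S b) \<and>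
    first r p (\<lambda>l. coords f (g l) b) = Some (coords f S b)"
proof -
  have basis: "basis_among f {..<r} (g l)" if "l < p" for l
    using g that by (auto simp: bij_betw_def)
  have coords_zero: "coords f S b k = 0" if "basis_among f {..<r} S" "k \<notin> S" for S k
    using that by (simp add: coords_def)
  have repr: "lincomb (coords f S b) f S = b" if "basis_among f {..<r} S" for S
    using lincomb_coords basis_among_lincomb[OF that] unfolding b_def by metis
  have "\<exists>l<p. nonneg_vec r (coords f (g l) b)"
  proof -
    obtain S where S: "basis_among f {..<r} S" "\<forall>k. coords f S b k \<ge> 0"
      using exists_basis_nonneg_coords[of "{..<r}" y f] y unfolding b_def by auto
    then obtain l where "l < p" "g l = S"
      using g unfolding bij_betw_def by (metis (no_types, lifting) imageE lessThan_iff mem_Collect_eq)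
    then show ?thesis using S(2) by (auto simp: nonneg_vec_def)
  qed
  moreover have "\<forall>k<r. coords f (g l) b k = coords f (g l') b k"
    if "l < p" "l' < p" "supp r (coords f (g l) b) = supp r (coords f (g l') b)" for l l'
  proof -
    have B: "g l \<subseteq> {..<r}" "lin_indep f (g l)" "g l' \<subseteq> {..<r}"
      using basis[OF that(1)] basis[OF that(2)] by (auto simp: basis_among_def)
    have "{k. coords f (g l) b k \<noteq> 0} = {k. coords f (g l') b k \<noteq> 0}"
      using that(3) B coords_zero[OF basis[OF that(1)]] coords_zero[OF basis[OF that(2)]]
      unfolding supp_def by blast
    then have "coords f (g l) b = coords f (g l') b"
      using lincomb_same_support_eq[OF B(2) finite_subset[OF B(1)] finite_subset[OF B(3)]]
        coords_zero basis that repr by simp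
    then show ?thesis by simp
  qed
  ultimately obtain l where l: "l < p" "nonneg_vec r (coords f (g l) b)"
      "first r p (\<lambda>l. coords f (g l) b) = Some (\<lambda>k. if k < r then coords f (g l) b k else 0)"
    using first_eq_Some[of p r "\<lambda>l. coords f (g l) b"] by blast
  have "(\<lambda>k. if k < r then coords f (g l) b k else 0) = coords f (g l) b"
    using basis[OF l(1)] coords_zero[OF basis[OF l(1)]] by (auto simp: basis_among_def fun_eq_iff)
  then show ?thesis using l basis by metis
qed

section \<open>Row bases and the column half of the test\<close>

lemma sum_elem:
  assumes "finite U"
  shows "(\<Sum>a<card U. h (elem U a)) = sum h U"
proof -
  have "sum h U = sum_list (map h (sorted_list_of_set U))"
    using sum.distinct_set_conv_list[of "sorted_list_of_set U" h] assms by simp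
  also have "\<dots> = (\<Sum>a<card U. h (elem U a))"
    using assms by (simp add: sum_list_sum_nth atLeast0LessThan elem_def)
  finally show ?thesis by simp
qed

locale row_basis =
  fixes m r :: nat and A :: "nat \<Rightarrow> nat \<Rightarrow> real" and U :: "nat set"
  assumes U_subset: "U \<subseteq> {..<m}"
    and rows_indep: "\<And>c. \<forall>k<r. (\<Sum>u\<in>U. c u * A u k) = 0 \<Longrightarrow> \<forall>u\<in>U. c u = 0"
    and rows_span: "\<And>j. j < m \<Longrightarrow> \<exists>c. \<forall>k<r. A j k = (\<Sum>u\<in>U. c u * A u k)"
begin

definition col :: "nat \<Rightarrow> nat \<Rightarrow> real" where
  "col k = (\<lambda>u. if u \<in> U then A u k else 0)"

definition bases :: "nat set set" where
  "bases = {S. basis_among col {..<r} S}"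

text \<open>The matrix \<open>B\<close> of the test attached to the column basis \<open>S\<close>: column \<open>a\<close> holds the
  \<open>S\<close>-coordinates of the unit vector of the \<open>a\<close>-th element of \<open>U\<close>.\<close>
definition right_inverse :: "nat set \<Rightarrow> nat \<Rightarrow> nat \<Rightarrow> real" where
  "right_inverse S = (\<lambda>k a. coords col S (unit_vec (elem U a)) k)"

lemma finite_U: "finite U"
  using U_subset finite_subset by blast

lemma col_rows_indep: "\<forall>k\<in>{..<r}. (\<Sum>u\<in>U. c u * col k u) = 0 \<Longrightarrow> \<forall>u\<in>U. c u = 0"
  using rows_indep[of c] by (simp add: col_def cong: sum.cong)

lemma col_outside_U: "x \<notin> U \<Longrightarrow> col k x = 0"
  by (simp add: col_def)

lemma card_basis: "S \<in> bases \<Longrightarrow> card S = card U"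
  using basis_among_card_eq[OF finite_U finite_lessThan col_outside_U col_rows_indep]
  by (simp add: bases_def)

lemma lincomb_coords_col: "S \<in> bases \<Longrightarrow> (\<And>x. x \<notin> U \<Longrightarrow> v x = 0) \<Longrightarrow> lincomb (coords col S v) col S = v"
  using basis_among_spans_support[OF finite_U finite_lessThan col_outside_U col_rows_indep]
  by (simp add: bases_def)

lemma finite_bases: "finite bases"
  by (rule finite_subset[of _ "Pow {..<r}"]) (auto simp: bases_def basis_among_def)

lemma bases_nonempty: "bases \<noteq> {}"
  using lin_indep_extend[of "{..<r}" "{}" col] lin_indep_empty by (auto simp: bases_def basis_among_def)

lemma card_U_le: "card U \<le> r"
proof -
  obtain S where "S \<in> bases" using bases_nonempty by blast
  then have "card U = card S" "S \<subseteq> {..<r}" using card_basis by (auto simp: bases_def basis_among_def)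
  then show ?thesis using card_mono[of "{..<r}" S] by simp
qed

lemma card_bases_le: "card bases \<le> r choose card U"
proof -
  have "bases \<subseteq> {S. S \<subseteq> {..<r} \<and> card S = card U}"
    using card_basis by (auto simp: bases_def basis_among_def)
  then have "card bases \<le> card {S. S \<subseteq> {..<r} \<and> card S = card U}" by (intro card_mono) auto
  also have "\<dots> = r choose card U" using n_subsets[of "{..<r}" "card U"] by simp
  finally show ?thesis .
qed

lemma lincomb_col: "u \<in> U \<Longrightarrow> lincomb x col {..<r} u = (\<Sum>k<r. A u k * x k)"
  by (simp add: lincomb_def col_def mult.commute)

lemma solves_if_solves_rows_U:
  assumes "\<forall>j<m. b j = (\<Sum>k<r. A j k * y k)" "\<forall>u\<in>U. b u = (\<Sum>k<r. A u k * x k)"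
  shows "\<forall>j<m. b j = (\<Sum>k<r. A j k * x k)"
proof (intro allI impI)
  fix j assume j: "j < m"
  obtain c where c: "\<forall>k<r. A j k = (\<Sum>u\<in>U. c u * A u k)" using rows_span[OF j] by blast
  have row_comb: "(\<Sum>k<r. A j k * z k) = (\<Sum>u\<in>U. c u * (\<Sum>k<r. A u k * z k))" for z
  proof -
    have "(\<Sum>k<r. A j k * z k) = (\<Sum>k<r. \<Sum>u\<in>U. c u * A u k * z k)"
      by (intro sum.cong) (simp_all add: c sum_distrib_right)
    also have "\<dots> = (\<Sum>u\<in>U. c u * (\<Sum>k<r. A u k * z k))"
      by (subst sum.swap) (simp add: sum_distrib_left mult.assoc)
    finally show ?thesis .
  qed
  have "b j = (\<Sum>u\<in>U. c u * (\<Sum>k<r. A u k * y k))" using assms(1) j row_comb[of y] by simp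
  also have "\<dots> = (\<Sum>u\<in>U. c u * b u)" using assms(1) U_subset by (intro sum.cong) auto
  also have "\<dots> = (\<Sum>k<r. A j k * x k)" using row_comb[of x] assms(2) by simp
  finally show "b j = (\<Sum>k<r. A j k * x k)" .
qed

lemma colvec_right_inverse:
  assumes "S \<in> bases"
  shows "colvec r M U (right_inverse S) i = coords col S (\<lambda>x. if x \<in> U then M x i else 0)"
proof -
  have S: "lin_indep col S" using assms by (simp add: bases_def basis_among_def)
  have unit: "\<exists>c. unit_vec u = lincomb c col S" if "u \<in> U" for u
  proof
    show "unit_vec u = lincomb (coords col S (unit_vec u)) col S"
      using that by (intro lincomb_coords_col[OF assms, symmetric]) (auto simp: unit_vec_def)
  qed
  have "colvec r M U (right_inverse S) i = (\<lambda>k. \<Sum>u\<in>U. M u i * coords col S (unit_vec u) k)"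
  proof
    fix k
    show "colvec r M U (right_inverse S) i k = (\<Sum>u\<in>U. M u i * coords col S (unit_vec u) k)"
      using sum_elem[OF finite_U, of "\<lambda>u. M u i * coords col S (unit_vec u) k"]
      by (simp add: colvec_def right_inverse_def mult.commute)
  qed
  also have "\<dots> = coords col S (\<lambda>x. \<Sum>u\<in>U. M u i * unit_vec u x)"
    using coords_sum[where f = col and U = U and v = unit_vec and a = "\<lambda>u. M u i", OF S unit] ..
  also have "(\<lambda>x. \<Sum>u\<in>U. M u i * unit_vec u x) = (\<lambda>x. if x \<in> U then M x i else 0)"
    using finite_U by (simp add: unit_vec_def fun_eq_iff if_distrib[of "\<lambda>c. _ * c"] sum.delta' cong: if_cong)
  finally show ?thesis .
qed

lemma first_colvec_solves:
  assumes g: "bij_betw g {..<p} bases"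
    and y: "nonneg_vec r y" "\<forall>j<m. M j i = (\<Sum>k<r. A j k * y k)"
  shows "\<exists>w. first r p (\<lambda>l. colvec r M U (right_inverse (g l)) i) = Some w \<and> nonneg_vec r w \<and>
    (\<forall>j<m. M j i = (\<Sum>k<r. A j k * w k))"
proof -
  define b where "b = (\<lambda>x. if x \<in> U then M x i else 0)"
  have b: "b = lincomb y col {..<r}"
    using y(2) U_subset by (auto simp: b_def col_def fun_eq_iff lincomb_def mult.commute)
  obtain S where S: "basis_among col {..<r} S" "nonneg_vec r (coords col S b)"
      "first r p (\<lambda>l. coords col (g l) b) = Some (coords col S b)"
    using first_coords_nonneg[OF g[unfolded bases_def] y(1)[unfolded nonneg_vec_def]] unfolding b
    by blast
  then have S_basis: "S \<in> bases" by (simp add: bases_def)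
  have "colvec r M U (right_inverse (g l)) i = coords col (g l) b" if "l < p" for l
    using colvec_right_inverse[OF bij_betw_apply[OF g]] that unfolding b_def by simp
  then have "first r p (\<lambda>l. colvec r M U (right_inverse (g l)) i) = Some (coords col S b)"
    using S(3) first_cong[of p "\<lambda>l. colvec r M U (right_inverse (g l)) i"] by simp
  moreover have "\<forall>u\<in>U. M u i = (\<Sum>k<r. A u k * coords col S b k)"
  proof
    fix u assume u: "u \<in> U"
    have "S \<subseteq> {..<r}" using S(1) by (simp add: basis_among_def)
    then have "lincomb (coords col S b) col {..<r} = lincomb (coords col S b) col S"
      by (intro lincomb_mono_neutral) (auto simp: coords_def)
    also have "\<dots> = b" by (rule lincomb_coords_col[OF S_basis]) (simp add: b_def)
    finally show "M u i = (\<Sum>k<r. A u k * coords col S b k)" using u lincomb_col[OF u] b_def by metis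
  qed
  ultimately show ?thesis using solves_if_solves_rows_U[OF y(2)] S(2) by blast
qed

end

lemma row_basis_exists: "\<exists>U. row_basis m r A U"
proof -
  define row where "row j = (\<lambda>k. if k < r then A j k else 0)" for j
  from lin_indep_extend[OF finite_lessThan empty_subsetI lin_indep_empty, of m row]
  obtain U where U: "U \<subseteq> {..<m}" "lin_indep row U" "\<forall>j\<in>{..<m}. \<exists>c. row j = lincomb c row U"
    by blast
  have "\<forall>u\<in>U. c u = 0" if "\<forall>k<r. (\<Sum>u\<in>U. c u * A u k) = 0" for c
  proof -
    have "lincomb c row U = 0"
    proof
      fix k
      show "lincomb c row U k = 0 k" using that by (cases "k < r") (simp_all add: lincomb_def row_def)
    qed
    then show ?thesis using U(2) unfolding lin_indep_def by blast
  qed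
  moreover have "\<exists>c. \<forall>k<r. A j k = (\<Sum>u\<in>U. c u * A u k)" if "j < m" for j
  proof -
    have "\<exists>c. row j = lincomb c row U" using U(3) that by simp
    then obtain c where c: "row j = lincomb c row U" ..
    have "A j k = (\<Sum>u\<in>U. c u * A u k)" if "k < r" for k
      using fun_cong[OF c, of k] that by (simp add: lincomb_def row_def)
    then show ?thesis by (intro exI[of _ c] allI impI)
  qed
  ultimately show ?thesis using U(1) unfolding row_basis_def by (intro exI[of _ U] conjI allI impI)
qed

lemma ex_first_colvec_solutions:
  fixes A M :: "nat \<Rightarrow> nat \<Rightarrow> real"
  assumes "\<And>i. i < n \<Longrightarrow> \<exists>y. nonneg_vec r y \<and> (\<forall>j<m. M j i = (\<Sum>k<r. A j k * y k))"
  shows "\<exists>U p Bs. U \<subseteq> {0..<m} \<and> card U \<le> r \<and> 0 < p \<and> p \<le> r choose card U \<and>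
     (\<forall>i<n. \<exists>w. first r p (\<lambda>l. colvec r M U (Bs l) i) = Some w \<and> nonneg_vec r w \<and>
        (\<forall>j<m. M j i = (\<Sum>k<r. A j k * w k)))"
proof -
  obtain U where "row_basis m r A U" using row_basis_exists by blast
  then interpret row_basis m r A U .
  obtain g where g: "bij_betw g {..<card bases} bases"
    using ex_bij_betw_nat_finite[OF finite_bases] by (auto simp: atLeast0LessThan)
  have "\<forall>i<n. \<exists>w. first r (card bases) (\<lambda>l. colvec r M U (right_inverse (g l)) i) = Some w \<and>
      nonneg_vec r w \<and> (\<forall>j<m. M j i = (\<Sum>k<r. A j k * w k))"
  proof (intro allI impI)
    fix i assume "i < n"
    then obtain y where "nonneg_vec r y" "\<forall>j<m. M j i = (\<Sum>k<r. A j k * y k)" using assms by blast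
    then show "\<exists>w. first r (card bases) (\<lambda>l. colvec r M U (right_inverse (g l)) i) = Some w \<and>
        nonneg_vec r w \<and> (\<forall>j<m. M j i = (\<Sum>k<r. A j k * w k))"
      by (rule first_colvec_solves[OF g])
  qed
  moreover have "0 < card bases" using finite_bases bases_nonempty by (simp add: card_gt_0_iff)
  ultimately show ?thesis using U_subset card_U_le card_bases_le
    by (intro exI[of _ U] exI[of _ "card bases"] exI[of _ "\<lambda>l. right_inverse (g l)"]) auto
qed

section \<open>Nonnegative rank and the test\<close>

lemma nonneg_factorization_mono:
  assumes "nonneg_factorization m n M r0" "r0 \<le> r"
  shows "nonneg_factorization m n M r"
proof -
  obtain A W where AW: "nonneg_mat m r0 A" "nonneg_mat r0 n W"
      "\<forall>i<m. \<forall>j<n. M i j = (\<Sum>k<r0. A i k * W k j)"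
    using assms(1) unfolding nonneg_factorization_def by blast
  define A' where "A' i k = (if k < r0 then A i k else 0)" for i k
  define W' where "W' k j = (if k < r0 then W k j else 0)" for k j
  have "(\<Sum>k<r. A' i k * W' k j) = (\<Sum>k<r0. A i k * W k j)" for i j
  proof -
    have "(\<Sum>k<r. A' i k * W' k j) = (\<Sum>k<r0. A' i k * W' k j)"
      using assms(2) by (intro sum.mono_neutral_right) (auto simp: A'_def)
    also have "\<dots> = (\<Sum>k<r0. A i k * W k j)" by (intro sum.cong) (auto simp: A'_def W'_def)
    finally show ?thesis .
  qed
  then have "\<forall>i<m. \<forall>j<n. M i j = (\<Sum>k<r. A' i k * W' k j)" using AW(3) by simp
  moreover have "nonneg_mat m r A'" "nonneg_mat r n W'"
    using AW(1,2) by (auto simp: nonneg_mat_def A'_def W'_def)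
  ultimately show ?thesis unfolding nonneg_factorization_def by blast
qed

lemma nonneg_factorization_self: "nonneg_mat m n M \<Longrightarrow> nonneg_factorization m n M n"
  unfolding nonneg_factorization_def
proof (intro exI conjI)
  show "nonneg_mat n n (\<lambda>k j. if k = j then 1 else 0)" by (simp add: nonneg_mat_def)
  show "\<forall>i<m. \<forall>j<n. M i j = (\<Sum>k<n. M i k * (if k = j then 1 else 0))"
    by (simp add: if_distrib[of "\<lambda>x. _ * x"] sum.delta' cong: if_cong)
qed

lemma nonneg_rank_le_iff:
  assumes "nonneg_mat m n M"
  shows "nonneg_rank m n M \<le> r \<longleftrightarrow> nonneg_factorization m n M r"
proof
  assume "nonneg_rank m n M \<le> r"
  moreover have "nonneg_factorization m n M (nonneg_rank m n M)"
    unfolding nonneg_rank_def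
    by (rule LeastI[of "nonneg_factorization m n M" n, OF nonneg_factorization_self[OF assms]])
  ultimately show "nonneg_factorization m n M r" using nonneg_factorization_mono by blast
qed (simp add: nonneg_rank_def Least_le)

lemma nonneg_factorization_if_test_P:
  assumes "test_P m n r M U V p q Bs Cs"
  shows "nonneg_factorization m n M r"
proof -
  define W where "W i = first r p (\<lambda>l. colvec r M U (Bs l) i)" for i
  define A where "A j = first r q (\<lambda>l. rowvec r M V (Cs l) j)" for j
  have WA: "\<forall>i<n. W i \<noteq> None" "\<forall>j<m. A j \<noteq> None"
     "\<forall>i<n. \<forall>j<m. (\<Sum>k<r. the (A j) k * the (W i) k) = M j i"
    using assms unfolding test_P_def Let_def W_def A_def by auto
  have "nonneg_vec r (the (W i))" if "i < n" for i
    using WA(1) first_Some_nonneg that unfolding W_def by fastforce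
  moreover have "nonneg_vec r (the (A j))" if "j < m" for j
    using WA(2) first_Some_nonneg that unfolding A_def by fastforce
  ultimately have "nonneg_mat m r (\<lambda>j k. the (A j) k)" "nonneg_mat r n (\<lambda>k i. the (W i) k)"
    by (auto simp: nonneg_mat_def nonneg_vec_def)
  then show ?thesis unfolding nonneg_factorization_def using WA(3)
    by (intro exI[of _ "\<lambda>j k. the (A j) k"] exI[of _ "\<lambda>k i. the (W i) k"]) auto
qed

text \<open>Apply \<open>ex_first_colvec_solutions\<close> to \<open>M = A W\<close> to recover a nonnegative \<open>W'\<close> with
  \<open>M = A W'\<close>, then to \<open>M\<^sup>T = W'\<^sup>T A\<^sup>T\<close> to recover the rows of \<open>A\<close>.\<close>
lemma test_P_if_nonneg_factorization:
  assumes "nonneg_factorization m n M r"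
  shows "\<exists>U V p q Bs Cs. U \<subseteq> {0..<m} \<and> card U \<le> r \<and> V \<subseteq> {0..<n} \<and> card V \<le> r \<and>
    0 < p \<and> p \<le> r choose card U \<and> 0 < q \<and> q \<le> r choose card V \<and> test_P m n r M U V p q Bs Cs"
proof -
  obtain A W where AW: "nonneg_mat m r A" "nonneg_mat r n W"
      "\<forall>j<m. \<forall>i<n. M j i = (\<Sum>k<r. A j k * W k i)"
    using assms unfolding nonneg_factorization_def by blast
  have "\<exists>y. nonneg_vec r y \<and> (\<forall>j<m. M j i = (\<Sum>k<r. A j k * y k))" if "i < n" for i
    using AW(2,3) that by (intro exI[of _ "\<lambda>k. W k i"]) (auto simp: nonneg_mat_def nonneg_vec_def)
  then obtain U p Bs where U: "U \<subseteq> {0..<m}" "card U \<le> r" "0 < p" "p \<le> r choose card U"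
      and W': "\<forall>i<n. \<exists>w. first r p (\<lambda>l. colvec r M U (Bs l) i) = Some w \<and> nonneg_vec r w \<and>
        (\<forall>j<m. M j i = (\<Sum>k<r. A j k * w k))"
    using ex_first_colvec_solutions[of n r m M A] by blast
  define W' where "W' i = the (first r p (\<lambda>l. colvec r M U (Bs l) i))" for i
  have "\<exists>y. nonneg_vec r y \<and> (\<forall>i<n. M j i = (\<Sum>k<r. W' i k * y k))" if "j < m" for j
    using AW(1) W' that by (intro exI[of _ "A j"]) (auto simp: nonneg_mat_def nonneg_vec_def W'_def mult.commute)
  then obtain V q Cs where V: "V \<subseteq> {0..<n}" "card V \<le> r" "0 < q" "q \<le> r choose card V"
      and A': "\<forall>j<m. \<exists>a. first r q (\<lambda>l. colvec r (\<lambda>i j. M j i) V (Cs l) j) = Some a \<and>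
        nonneg_vec r a \<and> (\<forall>i<n. M j i = (\<Sum>k<r. W' i k * a k))"
    using ex_first_colvec_solutions[of m r n "\<lambda>i j. M j i" W'] by blast
  define Cs' where "Cs' l = (\<lambda>b k. Cs l k b)" for l
  have rowvec_eq: "rowvec r M V (Cs' l) j = colvec r (\<lambda>i j. M j i) V (Cs l) j" for l j
    by (simp add: rowvec_def colvec_def Cs'_def mult.commute)
  have "test_P m n r M U V p q Bs Cs'"
    unfolding test_P_def Let_def rowvec_eq
  proof (intro conjI allI impI)
    fix i assume "i < n"
    then show "first r p (\<lambda>l. colvec r M U (Bs l) i) \<noteq> None" using W' by auto
  next
    fix j assume "j < m"
    then show "first r q (\<lambda>l. colvec r (\<lambda>i j. M j i) V (Cs l) j) \<noteq> None" using A' by auto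
  next
    fix i j assume ij: "i < n" "j < m"
    obtain a where "first r q (\<lambda>l. colvec r (\<lambda>i j. M j i) V (Cs l) j) = Some a"
        "\<forall>i<n. M j i = (\<Sum>k<r. W' i k * a k)"
      using A' ij(2) by blast
    then show "(\<Sum>k<r. the (first r q (\<lambda>l. colvec r (\<lambda>i j. M j i) V (Cs l) j)) k *
        the (first r p (\<lambda>l. colvec r M U (Bs l) i)) k) = M j i"
      using ij(1) by (simp add: W'_def mult.commute)
  qed
  then show ?thesis using U V
    by (intro exI[of _ U] exI[of _ V] exI[of _ p] exI[of _ q] exI[of _ Bs] exI[of _ Cs']) simp
qed

theorem mainTheorem8:
  fixes m n r :: nat and M :: "nat \<Rightarrow> nat \<Rightarrow> real"
  assumes "nonneg_mat m n M" and "0 < r"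
  shows "nonneg_rank m n M \<le> r \<longleftrightarrow>
    (\<exists>s t U V p q Bs Cs. s \<le> r \<and> t \<le> r \<and>
       U \<subseteq> {0..<m} \<and> card U = s \<and> V \<subseteq> {0..<n} \<and> card V = t \<and>
       0 < p \<and> p \<le> r choose s \<and> 0 < q \<and> q \<le> r choose t \<and>
       test_P m n r M U V p q Bs Cs)"
  (is "_ \<longleftrightarrow> ?passes")
proof
  assume "nonneg_rank m n M \<le> r"
  then have "nonneg_factorization m n M r" using nonneg_rank_le_iff[OF assms(1)] by blast
  from test_P_if_nonneg_factorization[OF this] obtain U V p q Bs Cs
    where "U \<subseteq> {0..<m}" "card U \<le> r" "V \<subseteq> {0..<n}" "card V \<le> r" "0 < p" "p \<le> r choose card U"
      "0 < q" "q \<le> r choose card V" "test_P m n r M U V p q Bs Cs"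
    by blast
  then show ?passes
    by (intro exI[of _ "card U"] exI[of _ "card V"] exI[of _ U] exI[of _ V] exI[of _ p] exI[of _ q]
        exI[of _ Bs] exI[of _ Cs]) simp
next
  assume ?passes
  then obtain U V p q Bs Cs where "test_P m n r M U V p q Bs Cs"
    by (elim exE conjE) (erule that)
  then have "nonneg_factorization m n M r" by (rule nonneg_factorization_if_test_P)
  then show "nonneg_rank m n M \<le> r" by (simp add: nonneg_rank_le_iff[OF assms(1)])
qed

end
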